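(* Let $n=1$, $0<\alpha<1$, and on $\mathbb{R}$ let $d\sigma(y)=e^y\,dy$ and $d\omega(x)=\mathbf{1}_{[0,1]}(x)\,dx$. Then $A_2^\alpha(\sigma,\omega)=\infty$, while there is a constant $C=C(\alpha)<\infty$ such that $$\int_I|I_\alpha(\mathbf{1}_I\sigma)|^2\,d\omega\le C\,|3I|_\sigma\quad\text{for every bounded interval } I\subset\mathbb{R},$$ i.e. $\mathfrak{T}_{I_\alpha}(3)(\sigma,\omega)<\infty$.
   Context: On $\mathbb{R}$, $I_\alpha(f\mu)(x)=\int|x-y|^{\alpha-1}f(y)\,d\mu(y)$. For an interval $I$, $3I$ is the concentric interval of three times the length, $|I|_\mu=\mu(I)$. $A_2^\alpha(\sigma,\omega)=\sup_I\frac{|I|_\sigma|I|_\omega}{|I|^{2(1-\alpha)}}$ over intervals $I$. $\mathfrak{T}_{I_\alpha}(3)(\sigma,\omega)$ is the best constant $C$ in $\int_I|I_\alpha(\mathbf{1}_I\sigma)|^2d\omega\le C^2|3I|_\sigma$ over all intervals $I$. *)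

theory Defs
  imports "HOL-Analysis.Analysis"
begin

definition frac_int :: "real \<Rightarrow> real measure \<Rightarrow> real set \<Rightarrow> real \<Rightarrow> ennreal" where
  "frac_int \<alpha> \<mu> I x = (\<integral>\<^sup>+ y. indicator I y * ennreal (\<bar>x - y\<bar> powr (\<alpha> - 1)) \<partial>\<mu>)"

definition triple_interval :: "real \<Rightarrow> real \<Rightarrow> real set" where
  "triple_interval a b = {a - (b - a) .. b + (b - a)}"

definition A2_alpha :: "real \<Rightarrow> real measure \<Rightarrow> real measure \<Rightarrow> ennreal" where
  "A2_alpha \<alpha> \<sigma> \<omega> = (SUP p \<in> {p :: real \<times> real. fst p < snd p}.
      emeasure \<sigma> {fst p .. snd p} * emeasure \<omega> {fst p .. snd p}
        / ennreal ((snd p - fst p) powr (2 * (1 - \<alpha>))))"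

definition sigma_ex :: "real measure" where
  "sigma_ex = density lborel (\<lambda>y. ennreal (exp y))"

definition omega_ex :: "real measure" where
  "omega_ex = density lborel (indicator {0..1})"

end

theory Submission
  imports Defs "HOL-Real_Asymp.Real_Asymp"
begin

text \<open>
  The intervals [0,B] show that A_2^alpha is infinite: sigma[0,B] = e^B - 1 grows exponentially while
  omega[0,B] = 1 and |[0,B]|^(2(1-alpha)) grows polynomially.

  The testing condition holds because the kernel |x-y|^(alpha-1) is locally integrable and bounded by 1
  away from the diagonal: on I = [a,b] this gives I_alpha(1_I sigma) <= (2/alpha + 1) e^b pointwise,
  so the left-hand side is at most (2/alpha + 1)^2 e^(2b) min(b-a, 1), and it vanishes unless a <= 1.
  For such intervals the exponential growth of the density gives
  e^(2b) min(b-a, 1) <= e^3 sigma(3I), with sigma(3I) = e^(b+(b-a)) - e^(a-(b-a)).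
\<close>

lemma nn_integral_abs_powr_unit_interval:
  assumes "0 < \<alpha>"
  shows "(\<integral>\<^sup>+ s. ennreal (\<bar>s\<bar> powr (\<alpha> - 1)) * indicator {0..1} s \<partial>lborel) = ennreal (1 / \<alpha>)"
proof -
  have integral: "((\<lambda>s. s powr (\<alpha> - 1)) has_integral (1 / \<alpha>)) {0..1}"
    using has_integral_powr_from_0[of "\<alpha> - 1" 1] assms by simp
  have "(\<integral>\<^sup>+ s. ennreal (s powr (\<alpha> - 1)) * indicator {0..1} s \<partial>lborel) = ennreal (1 / \<alpha>)"
    by (rule nn_integral_has_integral_lebesgue'[OF _ integral]) auto
  then show ?thesis
    by (subst nn_integral_cong[where v = "\<lambda>s. ennreal (s powr (\<alpha> - 1)) * indicator {0..1} s"])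
       (auto split: split_indicator)
qed

lemma nn_integral_powr_kernel_local:
  assumes "0 < \<alpha>"
  shows "(\<integral>\<^sup>+ y. indicator {x - 1..x + 1} y * ennreal (\<bar>x - y\<bar> powr (\<alpha> - 1)) \<partial>lborel)
    \<le> ennreal (2 / \<alpha>)"
proof -
  let ?k = "\<lambda>y. ennreal (\<bar>x - y\<bar> powr (\<alpha> - 1))"
  have k_meas: "?k \<in> borel_measurable borel" by measurable
  have half: "(\<integral>\<^sup>+ y. ?k y * indicator {x + min 0 c..x + max 0 c} y \<partial>lborel) = ennreal (1 / \<alpha>)"
    if "c \<in> {-1, 1}" for c
  proof -
    have "(\<integral>\<^sup>+ y. ?k y * indicator {x + min 0 c..x + max 0 c} y \<partial>lborel)
        = (\<integral>\<^sup>+ s. ?k (x + c * s) * indicator {x + min 0 c..x + max 0 c} (x + c * s) \<partial>lborel)"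
      using nn_integral_real_affine[of "\<lambda>y. ?k y * indicator {x + min 0 c..x + max 0 c} y" c x]
        k_meas that by auto
    also have "\<dots> = (\<integral>\<^sup>+ s. ennreal (\<bar>s\<bar> powr (\<alpha> - 1)) * indicator {0..1} s \<partial>lborel)"
      using that by (intro nn_integral_cong) (auto split: split_indicator)
    finally show ?thesis
      using nn_integral_abs_powr_unit_interval[OF assms] by simp
  qed
  have "(\<integral>\<^sup>+ y. indicator {x - 1..x + 1} y * ?k y \<partial>lborel)
      \<le> (\<integral>\<^sup>+ y. ?k y * indicator {x + min 0 (-1)..x + max 0 (-1)} y
                 + ?k y * indicator {x + min 0 1..x + max 0 1} y \<partial>lborel)"
    by (rule nn_integral_mono) (auto split: split_indicator)
  also have "\<dots> = ennreal (1 / \<alpha>) + ennreal (1 / \<alpha>)"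
    using half[of "-1"] half[of 1] k_meas by (subst nn_integral_add) auto
  also have "\<dots> = ennreal (2 / \<alpha>)"
    using assms by (simp flip: ennreal_plus)
  finally show ?thesis .
qed

lemma emeasure_sigma_ex_interval:
  assumes "a \<le> b"
  shows "emeasure sigma_ex {a..b} = ennreal (exp b - exp a)"
proof -
  have integral: "(exp has_integral (exp b - exp a)) {a..b}"
    using assms by (intro fundamental_theorem_of_calculus)
      (auto intro!: derivative_eq_intros simp flip: has_real_derivative_iff_has_vector_derivative)
  have "(\<integral>\<^sup>+ y. ennreal (exp y) * indicator {a..b} y \<partial>lborel) = ennreal (exp b - exp a)"
    by (rule nn_integral_has_integral_lebesgue'[OF _ integral]) auto
  then show ?thesis
    unfolding sigma_ex_def by (subst emeasure_density) auto
qed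

lemma emeasure_omega_ex:
  assumes "S \<in> sets borel"
  shows "emeasure omega_ex S = emeasure lborel (S \<inter> {0..1})"
proof -
  have "emeasure omega_ex S = (\<integral>\<^sup>+ y. indicator {0..1} y * indicator S y \<partial>lborel)"
    unfolding omega_ex_def by (rule emeasure_density) (use assms in auto)
  also have "\<dots> = (\<integral>\<^sup>+ y. indicator (S \<inter> {0..1}) y \<partial>lborel)"
    by (auto intro!: nn_integral_cong split: split_indicator)
  finally show ?thesis
    using assms by simp
qed

lemma emeasure_omega_ex_interval_le: "emeasure omega_ex {a..b} \<le> ennreal (min (b - a) 1)"
proof (cases "a \<le> 1 \<and> 0 \<le> b \<and> a \<le> b")
  case True
  then have "{a..b} \<inter> {0..1} = {max a 0..min b 1}"
    by auto
  then show ?thesis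
    using True by (simp add: emeasure_omega_ex, simp add: min_def max_def)
next
  case False
  then have "{a..b} \<inter> {0..1} = {}"
    by auto
  then show ?thesis
    by (simp add: emeasure_omega_ex)
qed

lemma emeasure_omega_ex_interval_right:
  assumes "1 < a"
  shows "emeasure omega_ex {a..b} = 0"
proof -
  have "{a..b} \<inter> {0..1} = {}"
    using assms by auto
  then show ?thesis
    by (simp add: emeasure_omega_ex)
qed

lemma abs_powr_le_one:
  fixes t \<alpha> :: real
  assumes "1 \<le> \<bar>t\<bar>" "\<alpha> \<le> 1"
  shows "\<bar>t\<bar> powr (\<alpha> - 1) \<le> 1"
  using powr_mono[of "\<alpha> - 1" 0 "\<bar>t\<bar>"] assms by (auto split: if_splits)

lemma frac_int_sigma_ex_le:
  assumes "0 < \<alpha>" "\<alpha> \<le> 1" "a \<le> b"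
  shows "frac_int \<alpha> sigma_ex {a..b} x \<le> ennreal (exp b * (2 / \<alpha> + 1))"
proof -
  let ?k = "\<lambda>y. ennreal (\<bar>x - y\<bar> powr (\<alpha> - 1))"
  let ?near = "\<lambda>y. indicator {x - 1..x + 1} y * ?k y"
  have k_meas: "?k \<in> borel_measurable borel" by measurable
  have kernel_split: "?k y \<le> ?near y + 1" for y
    using abs_powr_le_one[of "x - y" \<alpha>] assms
    by (cases "y \<in> {x - 1..x + 1}") (auto simp: abs_if)
  have "frac_int \<alpha> sigma_ex {a..b} x
      = (\<integral>\<^sup>+ y. ennreal (exp y) * (indicator {a..b} y * ?k y) \<partial>lborel)"
    unfolding frac_int_def sigma_ex_def using k_meas by (subst nn_integral_density) auto
  also have "\<dots> \<le> (\<integral>\<^sup>+ y. ennreal (exp b) * ?near y + ennreal (exp y) * indicator {a..b} y \<partial>lborel)"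
  proof (rule nn_integral_mono)
    fix y
    have "ennreal (exp y) * (indicator {a..b} y * ?k y)
        \<le> indicator {a..b} y * ennreal (exp y) * (?near y + 1)"
      using kernel_split[of y] by (auto simp: mult_left_mono split: split_indicator)
    also have "\<dots> \<le> ennreal (exp b) * ?near y + ennreal (exp y) * indicator {a..b} y"
      by (auto simp: distrib_left mult_right_mono split: split_indicator)
    finally show "ennreal (exp y) * (indicator {a..b} y * ?k y)
        \<le> ennreal (exp b) * ?near y + ennreal (exp y) * indicator {a..b} y" .
  qed
  also have "\<dots> = ennreal (exp b) * (\<integral>\<^sup>+ y. ?near y \<partial>lborel) + emeasure sigma_ex {a..b}"
    unfolding sigma_ex_def using k_meas
    by (subst nn_integral_add) (auto simp: nn_integral_cmult emeasure_density)
  also have "\<dots> \<le> ennreal (exp b) * ennreal (2 / \<alpha>) + ennreal (exp b)"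
    using nn_integral_powr_kernel_local[OF assms(1)] emeasure_sigma_ex_interval[OF assms(3)]
    by (intro add_mono mult_left_mono ennreal_leI) auto
  also have "\<dots> = ennreal (exp b * (2 / \<alpha> + 1))"
    using assms by (simp add: distrib_left flip: ennreal_mult ennreal_plus)
  finally show ?thesis .
qed

lemma exp_mult_min_one_le:
  fixes t :: real
  assumes "0 \<le> t"
  shows "exp t * min t 1 \<le> exp 2 * (exp t - 1)"
proof (cases "t < 1")
  case True
  have "t \<le> exp t - 1"
    using exp_ge_add_one_self[of t] by linarith
  with True assms have "exp t * t \<le> exp 2 * (exp t - 1)"
    by (intro mult_mono) auto
  then show ?thesis
    using True by simp
next
  case False
  have "2 \<le> exp t" "3 \<le> exp (2::real)"
    using False exp_ge_add_one_self[of t] exp_ge_add_one_self[of 2] by linarith+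
  then have "2 * 1 \<le> (exp 2 - 1) * (exp t - 1)"
    by (intro mult_mono) auto
  then show ?thesis
    using False by (simp add: algebra_simps)
qed

lemma exp_sq_min_le_exp_triple:
  fixes a b :: real
  assumes "a < b" "a \<le> 1"
  shows "exp b ^ 2 * min (b - a) 1 \<le> exp 3 * (exp (b + (b - a)) - exp (a - (b - a)))"
proof -
  define L where "L = b - a"
  have "L > 0"
    using assms by (simp add: L_def)
  have "exp (a + 3 * L) \<le> exp 1 * exp (3 * L)"
    using assms(2) by (simp flip: exp_add)
  then have "exp (a + 3 * L) * min L 1 \<le> exp 1 * exp (3 * L) * min (3 * L) 1"
    using \<open>L > 0\<close> by (intro mult_mono) auto
  also have "\<dots> \<le> exp 1 * (exp 2 * (exp (3 * L) - 1))"
    using exp_mult_min_one_le[of "3 * L"] \<open>L > 0\<close> by (auto simp: mult.assoc intro!: mult_left_mono)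
  also have "\<dots> = exp 3 * (exp (3 * L) - 1)"
    by (simp flip: mult.assoc exp_add)
  finally have "exp (a - L) * (exp (a + 3 * L) * min L 1) \<le> exp (a - L) * (exp 3 * (exp (3 * L) - 1))"
    by (rule mult_left_mono) simp
  moreover have "exp b ^ 2 = exp (a - L) * exp (a + 3 * L)"
    by (simp add: L_def power2_eq_square flip: exp_add)
  moreover have "exp (b + (b - a)) - exp (a - (b - a)) = exp (a - L) * (exp (3 * L) - 1)"
    by (simp add: L_def algebra_simps flip: exp_add)
  ultimately show ?thesis
    by (simp add: L_def ac_simps)
qed

lemma testing_condition_sigma_ex_omega_ex:
  assumes "0 < \<alpha>" "\<alpha> \<le> 1" "a < b"
  shows "(\<integral>\<^sup>+ x. indicator {a..b} x * (frac_int \<alpha> sigma_ex {a..b} x)\<^sup>2 \<partial>omega_ex)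
    \<le> ennreal ((2 / \<alpha> + 1)^2 * exp 3) * emeasure sigma_ex (triple_interval a b)"
proof -
  define M where "M = exp b * (2 / \<alpha> + 1)"
  have "(\<integral>\<^sup>+ x. indicator {a..b} x * (frac_int \<alpha> sigma_ex {a..b} x)\<^sup>2 \<partial>omega_ex)
      \<le> (\<integral>\<^sup>+ x. ennreal (M^2) * indicator {a..b} x \<partial>omega_ex)"
  proof (rule nn_integral_mono)
    fix x
    have "(frac_int \<alpha> sigma_ex {a..b} x)\<^sup>2 \<le> (ennreal M)\<^sup>2"
      using frac_int_sigma_ex_le[of \<alpha> a b x] assms by (intro power_mono) (auto simp: M_def)
    also have "\<dots> = ennreal (M^2)"
      using assms by (simp add: M_def ennreal_power)
    finally have "(frac_int \<alpha> sigma_ex {a..b} x)\<^sup>2 \<le> ennreal (M^2)" .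
    then show "indicator {a..b} x * (frac_int \<alpha> sigma_ex {a..b} x)\<^sup>2 \<le> ennreal (M^2) * indicator {a..b} x"
      by (auto split: split_indicator)
  qed
  also have "\<dots> = ennreal (M^2) * emeasure omega_ex {a..b}"
    by (rule nn_integral_cmult_indicator) (simp add: omega_ex_def)
  also have "\<dots> \<le> ennreal ((2 / \<alpha> + 1)^2 * exp 3) * emeasure sigma_ex (triple_interval a b)"
  proof (cases "1 < a")
    case True
    then show ?thesis
      by (simp add: emeasure_omega_ex_interval_right)
  next
    case False
    have "ennreal (M^2) * emeasure omega_ex {a..b} \<le> ennreal (M^2 * min (b - a) 1)"
      using assms by (auto simp: ennreal_mult intro: mult_left_mono emeasure_omega_ex_interval_le)
    also have "\<dots> \<le> ennreal ((2 / \<alpha> + 1)^2 * exp 3 * (exp (b + (b - a)) - exp (a - (b - a))))"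
      using mult_left_mono[OF exp_sq_min_le_exp_triple[of a b], of "(2 / \<alpha> + 1)^2"] False assms
      by (intro ennreal_leI) (simp add: M_def power_mult_distrib ac_simps)
    also have "\<dots> = ennreal ((2 / \<alpha> + 1)^2 * exp 3) * emeasure sigma_ex (triple_interval a b)"
      using assms by (simp add: triple_interval_def emeasure_sigma_ex_interval ennreal_mult)
    finally show ?thesis .
  qed
  finally show ?thesis .
qed

lemma filterlim_exp_minus_one_over_square: "filterlim (\<lambda>B::real. (exp B - 1) / B^2) at_top at_top"
  by real_asymp

lemma A2_ratio_sigma_ex_omega_ex:
  assumes "1 \<le> B"
  shows "emeasure sigma_ex {0..B} * emeasure omega_ex {0..B} / ennreal (B powr p)
    = ennreal ((exp B - 1) / B powr p)"
  using assms
  by (simp add: emeasure_sigma_ex_interval emeasure_omega_ex Int_absorb1 divide_ennreal)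

lemma A2_alpha_sigma_ex_omega_ex:
  assumes "0 \<le> \<alpha>" "\<alpha> < 1"
  shows "A2_alpha \<alpha> sigma_ex omega_ex = \<infinity>"
  unfolding A2_alpha_def infinity_ennreal_def SUP_eq_top_iff
proof (intro allI impI)
  fix x :: ennreal
  assume "x < top"
  then obtain r where r: "x = ennreal r"
    by (cases x) auto
  have "\<forall>\<^sub>F B in at_top. r < (exp B - 1) / B^2"
    using filterlim_exp_minus_one_over_square unfolding filterlim_at_top_dense by blast
  then have eventually_large: "\<forall>\<^sub>F B in at_top. 1 \<le> B \<and> r < (exp B - 1) / B^2"
    by (intro eventually_conj eventually_ge_at_top)
  have "\<exists>B. 1 \<le> B \<and> r < (exp B - 1) / B^2"
    by (rule eventually_happens'[OF _ eventually_large]) simp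
  then obtain B where B: "1 \<le> B" "r < (exp B - 1) / B^2"
    by blast
  have "B powr (2 * (1 - \<alpha>)) \<le> B^2"
    using B(1) assms powr_mono[of "2 * (1 - \<alpha>)" 2 B] by simp
  then have "(exp B - 1) / B^2 \<le> (exp B - 1) / B powr (2 * (1 - \<alpha>))"
    using B(1) by (intro divide_left_mono) auto
  with B(2) have "r < (exp B - 1) / B powr (2 * (1 - \<alpha>))"
    by linarith
  then have "x < ennreal ((exp B - 1) / B powr (2 * (1 - \<alpha>)))"
    unfolding r using B(1) by (intro ennreal_lessI divide_pos_pos) auto
  then show "\<exists>p\<in>{p. fst p < snd p}. x < emeasure sigma_ex {fst p..snd p} * emeasure omega_ex {fst p..snd p}
      / ennreal ((snd p - fst p) powr (2 * (1 - \<alpha>)))"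
    using B(1) by (intro bexI[of _ "(0, B)"]) (auto simp: A2_ratio_sigma_ex_omega_ex)
qed

theorem mainTheorem5:
  fixes \<alpha> :: real
  assumes "0 < \<alpha>" and "\<alpha> < 1"
  shows "A2_alpha \<alpha> sigma_ex omega_ex = \<infinity>
    \<and> (\<exists>C :: real. \<forall>a b :: real. a < b \<longrightarrow>
          (\<integral>\<^sup>+ x. indicator {a..b} x * (frac_int \<alpha> sigma_ex {a..b} x)\<^sup>2 \<partial>omega_ex)
            \<le> ennreal C * emeasure sigma_ex (triple_interval a b))"
  using A2_alpha_sigma_ex_omega_ex testing_condition_sigma_ex_omega_ex[of \<alpha>] assms
  by (intro conjI exI[of _ "(2 / \<alpha> + 1)^2 * exp 3"]) auto

end
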